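(* Let $\delta>0$, $\rho>0$ and $\eta_c>0$, and let $g(A,\eta)=\delta(\eta-\eta_c)$ and $h(A,\eta)=\rho\left(112.88+56.91\eta-24.31\eta^2-11.05\eta^3-\frac{A}{1.5}\right)$. Consider the piecewise vector field $$\dot A=g(A,\eta),\qquad \dot\eta=\begin{cases} -|h| & \eta>1,\\ \tfrac{h-|h|}{2} & \eta=1,\\ h & 0<\eta<1,\\ \tfrac{h+|h|}{2} & \eta=0,\\ |h| & \eta<0. \end{cases}$$ Then any (forward-unique) Filippov solution $(A(t),\eta(t))$ of this system that reaches the boundary $\eta=0$, say $\eta(t_0)=0$, leaves it in finite time: there exists $t_1>t_0$ with $\eta(t_1)>0$.
   Context: Filippov solutions: for a locally essentially bounded vector field $F$ on $\mathbb{R}^2$, let $\mathcal{K}[F](z)=\bigcap_{\delta'>0}\bigcap_{\mu(N)=0}\overline{\mathrm{co}}\,F(B_{\delta'}(z)\setminus N)$; a Filippov solution is an absolutely continuous curve $z(t)$ with $\dot z(t)\in\mathcal{K}[F](z(t))$ for almost every $t$. Such solutions exist and are unique in forward time for this system. *)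

theory Defs
  imports "HOL-Analysis.Analysis"
begin

definition abs_cont_on :: "real set \<Rightarrow> (real \<Rightarrow> 'a::real_normed_vector) \<Rightarrow> bool" where
  "abs_cont_on S f \<longleftrightarrow>
     (\<forall>e>0. \<exists>d>0. \<forall>(n::nat) (a::nat \<Rightarrow> real) b.
        (\<forall>i<n. a i \<le> b i \<and> {a i..b i} \<subseteq> S) \<and>
        (\<forall>i<n. \<forall>j<n. i \<noteq> j \<longrightarrow> b i \<le> a j \<or> b j \<le> a i) \<and>
        (\<Sum>i<n. b i - a i) < d
        \<longrightarrow> (\<Sum>i<n. norm (f (b i) - f (a i))) < e)"

definition filippov_set :: "('a::euclidean_space \<Rightarrow> 'a) \<Rightarrow> 'a \<Rightarrow> 'a set" where
  "filippov_set F z =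
     (\<Inter>d\<in>{d::real. d > 0}. \<Inter>N\<in>{N. negligible N}. closure (convex hull (F ` (ball z d - N))))"

definition filippov_solution :: "('a::euclidean_space \<Rightarrow> 'a) \<Rightarrow> real set \<Rightarrow> (real \<Rightarrow> 'a) \<Rightarrow> bool" where
  "filippov_solution F I z \<longleftrightarrow>
     (\<forall>a b. {a..b} \<subseteq> I \<longrightarrow> abs_cont_on {a..b} z) \<and>
     (AE t in lebesgue. t \<in> I \<longrightarrow>
        (\<exists>v. (z has_vector_derivative v) (at t) \<and> v \<in> filippov_set F (z t)))"

definition g_fun :: "real \<Rightarrow> real \<Rightarrow> real \<Rightarrow> real \<Rightarrow> real" where
  "g_fun \<delta> \<eta>c A \<eta> = \<delta> * (\<eta> - \<eta>c)"

definition h_fun :: "real \<Rightarrow> real \<Rightarrow> real \<Rightarrow> real" where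
  "h_fun \<rho> A \<eta> = \<rho> * (112.88 + 56.91 * \<eta> - 24.31 * \<eta>^2 - 11.05 * \<eta>^3 - A / 1.5)"

definition eta_dot :: "real \<Rightarrow> real \<Rightarrow> real \<Rightarrow> real" where
  "eta_dot \<rho> A \<eta> =
     (let h = h_fun \<rho> A \<eta> in
      if \<eta> > 1 then - \<bar>h\<bar>
      else if \<eta> = 1 then (h - \<bar>h\<bar>) / 2
      else if 0 < \<eta> then h
      else if \<eta> = 0 then (h + \<bar>h\<bar>) / 2
      else \<bar>h\<bar>)"

definition field :: "real \<Rightarrow> real \<Rightarrow> real \<Rightarrow> real \<times> real \<Rightarrow> real \<times> real" where
  "field \<delta> \<rho> \<eta>c z = (g_fun \<delta> \<eta>c (fst z) (snd z), eta_dot \<rho> (fst z) (snd z))"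

end

theory Submission
  imports Defs
begin

(* If eta(t) <= 0 for all t >= t0, every Filippov velocity v at
   z(t) satisfies fst v <= delta (eta - eta_c) <= -delta eta_c, so A decreases at least
   linearly and drops below -902 after a finite time T.  From then on the polynomial h is
   at least rho, and every Filippov velocity has snd v >= h >= rho, so eta increases at
   least linearly and exceeds 1 -- contradicting eta <= 0. *)

text \<open>Polynomial.content (gcd of coefficients) would shadow the interval length
  Henstock_Kurzweil_Integration.content used throughout.\<close>
hide_const (open) Polynomial.content

section \<open>Absolutely continuous functions\<close>

definition interval_family :: "real set \<Rightarrow> nat \<Rightarrow> (nat \<Rightarrow> real) \<Rightarrow> (nat \<Rightarrow> real) \<Rightarrow> bool" where
  "interval_family S n a b \<longleftrightarrow>
     (\<forall>i<n. a i \<le> b i \<and> {a i..b i} \<subseteq> S) \<and>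
     (\<forall>i<n. \<forall>j<n. i \<noteq> j \<longrightarrow> b i \<le> a j \<or> b j \<le> a i)"

lemma abs_cont_on_iff:
  "abs_cont_on S f \<longleftrightarrow>
     (\<forall>e>0. \<exists>d>0. \<forall>n a b. interval_family S n a b \<and> (\<Sum>i<n. b i - a i) < d
        \<longrightarrow> (\<Sum>i<n. norm (f (b i) - f (a i))) < e)"
  unfolding abs_cont_on_def interval_family_def by (simp only: conj_assoc)

lemma abs_cont_on_inner:
  fixes z :: "real \<Rightarrow> 'a::real_inner"
  assumes "abs_cont_on S z"
  shows "abs_cont_on S (\<lambda>t. u \<bullet> z t)"
  unfolding abs_cont_on_iff
proof (intro allI impI)
  fix e :: real assume e: "e > 0"
  then have "e / (norm u + 1) > 0" by (simp add: add_nonneg_pos)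
  then obtain d where d: "d > 0" and small: "\<And>n a b. interval_family S n a b \<Longrightarrow>
      (\<Sum>i<n. b i - a i) < d \<Longrightarrow> (\<Sum>i<n. norm (z (b i) - z (a i))) < e / (norm u + 1)"
    using assms unfolding abs_cont_on_iff by meson
  show "\<exists>d>0. \<forall>n a b. interval_family S n a b \<and> (\<Sum>i<n. b i - a i) < d \<longrightarrow>
      (\<Sum>i<n. norm (u \<bullet> z (b i) - u \<bullet> z (a i))) < e"
  proof (intro exI[of _ d] conjI allI impI d, elim conjE)
    fix n a b assume fam: "interval_family S n a b" and len: "(\<Sum>i<n. b i - a i) < d"
    have "(\<Sum>i<n. norm (u \<bullet> z (b i) - u \<bullet> z (a i))) \<le> (\<Sum>i<n. norm u * norm (z (b i) - z (a i)))"
      by (intro sum_mono) (simp add: inner_diff_right[symmetric] Cauchy_Schwarz_ineq2)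
    also have "\<dots> = norm u * (\<Sum>i<n. norm (z (b i) - z (a i)))"
      by (simp add: sum_distrib_left)
    also have "\<dots> \<le> norm u * (e / (norm u + 1))"
      using small[OF fam len] by (intro mult_left_mono) auto
    also have "\<dots> < e"
      using e add_pos_nonneg[OF zero_less_one norm_ge_zero, of u] by (simp add: field_simps)
    finally show "(\<Sum>i<n. norm (u \<bullet> z (b i) - u \<bullet> z (a i))) < e" .
  qed
qed

lemma abs_cont_on_diff_linear:
  fixes f :: "real \<Rightarrow> real"
  assumes "abs_cont_on S f"
  shows "abs_cont_on S (\<lambda>t. f t - c * t)"
  unfolding abs_cont_on_iff
proof (intro allI impI)
  fix e :: real assume e: "e > 0"
  then obtain d where d: "d > 0" and small: "\<And>n a b. interval_family S n a b \<Longrightarrow>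
      (\<Sum>i<n. b i - a i) < d \<Longrightarrow> (\<Sum>i<n. norm (f (b i) - f (a i))) < e / 2"
    using assms unfolding abs_cont_on_iff by (meson half_gt_zero)
  define d' where "d' = min d (e / (2 * (\<bar>c\<bar> + 1)))"
  have d': "d' > 0" using d e by (simp add: d'_def)
  show "\<exists>d>0. \<forall>n a b. interval_family S n a b \<and> (\<Sum>i<n. b i - a i) < d \<longrightarrow>
      (\<Sum>i<n. norm ((f (b i) - c * b i) - (f (a i) - c * a i))) < e"
  proof (intro exI[of _ d'] conjI allI impI d', elim conjE)
    fix n a b assume fam: "interval_family S n a b" and len: "(\<Sum>i<n. b i - a i) < d'"
    have ordered: "a i \<le> b i" if "i < n" for i
      using fam that unfolding interval_family_def by blast
    have "(\<Sum>i<n. norm ((f (b i) - c * b i) - (f (a i) - c * a i))) \<le>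
          (\<Sum>i<n. norm (f (b i) - f (a i)) + \<bar>c\<bar> * (b i - a i))"
    proof (rule sum_mono)
      fix i assume "i \<in> {..<n}"
      then have "\<bar>c * b i - c * a i\<bar> = \<bar>c\<bar> * (b i - a i)"
        using ordered by (simp add: abs_mult right_diff_distrib[symmetric])
      then show "norm ((f (b i) - c * b i) - (f (a i) - c * a i)) \<le> norm (f (b i) - f (a i)) + \<bar>c\<bar> * (b i - a i)"
        by simp
    qed
    also have "\<dots> = (\<Sum>i<n. norm (f (b i) - f (a i))) + \<bar>c\<bar> * (\<Sum>i<n. b i - a i)"
      by (simp add: sum.distrib sum_distrib_left)
    also have "\<dots> < e / 2 + e / 2"
    proof (rule add_less_le_mono)
      show "(\<Sum>i<n. norm (f (b i) - f (a i))) < e / 2"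
        using small[OF fam] len by (simp add: d'_def)
      have "\<bar>c\<bar> * (\<Sum>i<n. b i - a i) \<le> \<bar>c\<bar> * (e / (2 * (\<bar>c\<bar> + 1)))"
        using len by (intro mult_left_mono) (auto simp: d'_def)
      also have "\<dots> \<le> e / 2"
        using e by (simp add: field_simps)
      finally show "\<bar>c\<bar> * (\<Sum>i<n. b i - a i) \<le> e / 2" .
    qed
    finally show "(\<Sum>i<n. norm ((f (b i) - c * b i) - (f (a i) - c * a i))) < e" by simp
  qed
qed

lemma abs_cont_on_finite_family:
  fixes g :: "real \<Rightarrow> 'a::real_normed_vector"
  assumes "abs_cont_on S g" and "e > 0"
  shows "\<exists>d>0. \<forall>(Q :: 'b set) lo hi. finite Q \<longrightarrow>
       (\<forall>q\<in>Q. lo q \<le> hi q \<and> {lo q..hi q} \<subseteq> S) \<longrightarrow>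
       (\<forall>q\<in>Q. \<forall>q'\<in>Q. q \<noteq> q' \<longrightarrow> hi q \<le> lo q' \<or> hi q' \<le> lo q) \<longrightarrow>
       (\<Sum>q\<in>Q. hi q - lo q) < d \<longrightarrow> (\<Sum>q\<in>Q. norm (g (hi q) - g (lo q))) < e"
proof -
  obtain d where d: "d > 0" and small: "\<And>n a b. interval_family S n a b \<Longrightarrow>
      (\<Sum>i<n. b i - a i) < d \<Longrightarrow> (\<Sum>i<n. norm (g (b i) - g (a i))) < e"
    using assms unfolding abs_cont_on_iff by meson
  show ?thesis
  proof (intro exI[of _ d] conjI allI impI d)
    fix Q :: "'b set" and lo hi :: "'b \<Rightarrow> real"
    assume fin: "finite Q"
      and inside: "\<forall>q\<in>Q. lo q \<le> hi q \<and> {lo q..hi q} \<subseteq> S"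
      and apart: "\<forall>q\<in>Q. \<forall>q'\<in>Q. q \<noteq> q' \<longrightarrow> hi q \<le> lo q' \<or> hi q' \<le> lo q"
      and len: "(\<Sum>q\<in>Q. hi q - lo q) < d"
    obtain h where h: "bij_betw h {..<card Q} Q"
      using ex_bij_betw_nat_finite[OF fin] by (auto simp: lessThan_atLeast0)
    have "interval_family S (card Q) (lo \<circ> h) (hi \<circ> h)"
      using inside apart bij_betw_apply[OF h] bij_betw_imp_inj_on[OF h]
      unfolding interval_family_def inj_on_def by (metis comp_apply lessThan_iff)
    moreover have "(\<Sum>i<card Q. (hi \<circ> h) i - (lo \<circ> h) i) = (\<Sum>q\<in>Q. hi q - lo q)"
      using sum.reindex_bij_betw[OF h, of "\<lambda>q. hi q - lo q"] by simp
    moreover have "(\<Sum>i<card Q. norm (g ((hi \<circ> h) i) - g ((lo \<circ> h) i))) = (\<Sum>q\<in>Q. norm (g (hi q) - g (lo q)))"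
      using sum.reindex_bij_betw[OF h, of "\<lambda>q. norm (g (hi q) - g (lo q))"] by simp
    ultimately show "(\<Sum>q\<in>Q. norm (g (hi q) - g (lo q))) < e"
      using small len by metis
  qed
qed

lemma tagged_division_piece:
  fixes p :: "(real \<times> real set) set"
  assumes "p tagged_division_of {a..b}" and "(x,K) \<in> p"
  shows "K = {Inf K..Sup K}" "Inf K \<le> x" "x \<le> Sup K" "K \<subseteq> {a..b}" "content K = Sup K - Inf K"
proof -
  obtain u w where K: "K = cbox u w" using tagged_division_ofD(4)[OF assms] by blast
  moreover have "x \<in> K" "K \<subseteq> {a..b}" using tagged_division_ofD(2,3)[OF assms] by auto
  ultimately have "u \<le> x" "x \<le> w" "Inf K = u" "Sup K = w" by auto
  then show "K = {Inf K..Sup K}" "Inf K \<le> x" "x \<le> Sup K" "K \<subseteq> {a..b}" "content K = Sup K - Inf K"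
    using K \<open>K \<subseteq> {a..b}\<close> by auto
qed

lemma tagged_division_pieces_apart:
  fixes p :: "(real \<times> real set) set"
  assumes p: "p tagged_division_of {a..b}" and xK: "(x,K) \<in> p" and yL: "(y,L) \<in> p"
    and "(x,K) \<noteq> (y,L)" and "Inf K < Sup K" and "Inf L < Sup L"
  shows "Sup K \<le> Inf L \<or> Sup L \<le> Inf K"
proof (rule ccontr)
  assume "\<not> ?thesis"
  then have "(max (Inf K) (Inf L) + min (Sup K) (Sup L)) / 2 \<in> {Inf K<..<Sup K} \<inter> {Inf L<..<Sup L}"
    using assms(5,6) by (auto simp: max_def min_def)
  moreover have "interior K \<inter> interior L = {}"
    using tagged_division_ofD(5)[OF p xK yL assms(4)] .
  ultimately show False
    using tagged_division_piece(1)[OF p xK] tagged_division_piece(1)[OF p yL] by (metis empty_iff interior_atLeastAtMost_real)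
qed

lemma abs_cont_on_division_pieces:
  fixes g :: "real \<Rightarrow> real"
  assumes ac: "abs_cont_on {a..b} g" and e: "e > 0"
  shows "\<exists>d>0. \<forall>p B. p tagged_division_of {a..b} \<longrightarrow> B \<subseteq> p \<longrightarrow>
           (\<forall>(x,K)\<in>B. Inf K < Sup K) \<longrightarrow> (\<Sum>(x,K)\<in>B. content K) < d \<longrightarrow>
           - e < (\<Sum>(x,K)\<in>B. g (Sup K) - g (Inf K))"
proof -
  obtain d where d: "d > 0" and small: "\<forall>(Q :: (real \<times> real set) set) lo hi. finite Q \<longrightarrow>
       (\<forall>q\<in>Q. lo q \<le> hi q \<and> {lo q..hi q} \<subseteq> {a..b}) \<longrightarrow>
       (\<forall>q\<in>Q. \<forall>q'\<in>Q. q \<noteq> q' \<longrightarrow> hi q \<le> lo q' \<or> hi q' \<le> lo q) \<longrightarrow>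
       (\<Sum>q\<in>Q. hi q - lo q) < d \<longrightarrow> (\<Sum>q\<in>Q. norm (g (hi q) - g (lo q))) < e"
    using abs_cont_on_finite_family[OF ac e] by blast
  show ?thesis
  proof (intro exI[of _ d] conjI allI impI d)
    fix p B assume p: "p tagged_division_of {a..b}" and "B \<subseteq> p"
      and nondegenerate: "\<forall>(x,K)\<in>B. Inf K < Sup K" and length: "(\<Sum>(x,K)\<in>B. content K) < d"
    then have B: "finite B" "\<And>q. q \<in> B \<Longrightarrow> q \<in> p" by (auto intro: finite_subset)
    note piece = tagged_division_piece[OF p]
    have "(\<Sum>q\<in>B. norm (g (Sup (snd q)) - g (Inf (snd q)))) < e"
    proof (rule small[rule_format, OF B(1)])
      fix q assume "q \<in> B"
      then show "Inf (snd q) \<le> Sup (snd q) \<and> {Inf (snd q)..Sup (snd q)} \<subseteq> {a..b}"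
        using piece[of "fst q" "snd q"] B(2) by auto
    next
      fix q q' assume qq': "q \<in> B" "q' \<in> B" "q \<noteq> q'"
      then have "Inf (snd q) < Sup (snd q)" "Inf (snd q') < Sup (snd q')"
        using nondegenerate by (auto simp: case_prod_unfold)
      then show "Sup (snd q) \<le> Inf (snd q') \<or> Sup (snd q') \<le> Inf (snd q)"
        using tagged_division_pieces_apart[OF p, of "fst q" "snd q" "fst q'" "snd q'"] qq' B(2)
        by auto
    next
      have "(\<Sum>q\<in>B. Sup (snd q) - Inf (snd q)) = (\<Sum>(x,K)\<in>B. content K)"
      proof (rule sum.cong[OF refl])
        fix q assume "q \<in> B"
        then show "Sup (snd q) - Inf (snd q) = (case q of (x,K) \<Rightarrow> content K)"
          using piece(5)[of "fst q" "snd q"] B(2) by (simp add: case_prod_unfold)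
      qed
      then show "(\<Sum>q\<in>B. Sup (snd q) - Inf (snd q)) < d" using length by simp
    qed
    moreover have "- (\<Sum>q\<in>B. norm (g (Sup (snd q)) - g (Inf (snd q)))) \<le> (\<Sum>(x,K)\<in>B. g (Sup K) - g (Inf K))"
      unfolding sum_negf[symmetric] by (intro sum_mono) auto
    ultimately show "- e < (\<Sum>(x,K)\<in>B. g (Sup K) - g (Inf K))" by linarith
  qed
qed

lemma has_real_derivative_nonneg_increment:
  fixes g :: "real \<Rightarrow> real"
  assumes "(g has_real_derivative v) (at t)" and "v \<ge> 0" and "e > 0"
  obtains r where "r > 0"
    "\<And>u w. u \<le> t \<Longrightarrow> t \<le> w \<Longrightarrow> {u..w} \<subseteq> ball t r \<Longrightarrow> g u - g w \<le> e * (w - u)"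
proof -
  obtain r where r: "r > 0"
    and approx: "\<And>y. norm (y - t) < r \<Longrightarrow> norm (g y - g t - v * (y - t)) \<le> e * norm (y - t)"
    using assms(1,3) unfolding has_field_derivative_def has_derivative_at_alt by blast
  show ?thesis
  proof (rule that[OF r])
    fix u w assume ut: "u \<le> t" and tw: "t \<le> w" and sub: "{u..w} \<subseteq> ball t r"
    have "u \<in> {u..w}" "w \<in> {u..w}" using ut tw by auto
    then have "u \<in> ball t r" "w \<in> ball t r" using sub by auto
    then have "\<bar>g u - g t - v * (u - t)\<bar> \<le> e * (t - u)" "\<bar>g w - g t - v * (w - t)\<bar> \<le> e * (w - t)"
      using approx[of u] approx[of w] ut tw by (auto simp: dist_real_def abs_minus_commute)
    moreover have "v * (t - u) \<ge> 0" "v * (w - t) \<ge> 0" using ut tw assms(2) by auto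
    ultimately show "g u - g w \<le> e * (w - u)" by (simp add: algebra_simps abs_le_iff)
  qed
qed

lemma nonneg_derivative_gauge:
  fixes g :: "real \<Rightarrow> real"
  assumes der: "\<And>t. t \<in> S \<Longrightarrow> \<exists>v\<ge>0. (g has_real_derivative v) (at t)" and e: "e > 0"
  obtains \<gamma> where "gauge \<gamma>"
    "\<And>t u w. t \<in> S \<Longrightarrow> u \<le> t \<Longrightarrow> t \<le> w \<Longrightarrow> {u..w} \<subseteq> \<gamma> t \<Longrightarrow> g u - g w \<le> e * (w - u)"
proof -
  have "\<exists>r>0. t \<in> S \<longrightarrow>
          (\<forall>u w. u \<le> t \<longrightarrow> t \<le> w \<longrightarrow> {u..w} \<subseteq> ball t r \<longrightarrow> g u - g w \<le> e * (w - u))" for t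
  proof (cases "t \<in> S")
    case True
    then obtain v where "v \<ge> 0" "(g has_real_derivative v) (at t)" using der by blast
    then show ?thesis using has_real_derivative_nonneg_increment[OF _ _ e] by metis
  qed (auto intro: exI[of _ 1])
  then obtain R where "\<And>t. R t > 0" and "\<And>t u w. t \<in> S \<Longrightarrow> u \<le> t \<Longrightarrow> t \<le> w \<Longrightarrow>
      {u..w} \<subseteq> ball t (R t) \<Longrightarrow> g u - g w \<le> e * (w - u)"
    by metis
  then show ?thesis using that[of "\<lambda>t. ball t (R t)"] gauge_ball_dependent by blast
qed

lemma negligible_tags_small_content:
  fixes E :: "real set"
  assumes "negligible E" and "d > 0"
  obtains \<gamma> where "gauge \<gamma>"
    "\<And>p. p tagged_division_of {a..b} \<Longrightarrow> \<gamma> fine p \<Longrightarrow> (\<Sum>(x,K)\<in>{(x,K)\<in>p. x \<in> E}. content K) < d"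
proof -
  have "((indicator E :: real \<Rightarrow> real) has_integral 0) (cbox a b)"
    by (rule has_integral_negligible_cbox[OF assms(1)]) (simp add: indicator_def)
  then obtain \<gamma> where \<gamma>: "gauge \<gamma>" and riemann: "\<And>p. p tagged_division_of cbox a b \<Longrightarrow> \<gamma> fine p \<Longrightarrow>
      norm ((\<Sum>(x,K)\<in>p. content K *\<^sub>R (indicator E x :: real)) - 0) < d"
    using assms(2) unfolding has_integral by meson
  show ?thesis
  proof (rule that[OF \<gamma>])
    fix p assume p: "p tagged_division_of {a..b}" and fine: "\<gamma> fine p"
    have "(\<Sum>(x,K)\<in>{(x,K)\<in>p. x \<in> E}. content K) = (\<Sum>(x,K)\<in>p. content K *\<^sub>R (indicator E x :: real))"
      using p by (simp add: sum.inter_restrict split_beta indicator_def tagged_division_of_finite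
          Int_def conj_commute case_prod_unfold)
    also have "\<dots> < d" using riemann[OF _ fine] p by simp
    finally show "(\<Sum>(x,K)\<in>{(x,K)\<in>p. x \<in> E}. content K) < d" .
  qed
qed

lemma tagged_division_increments_lower:
  fixes g :: "real \<Rightarrow> real"
  assumes p: "p tagged_division_of {a..b}" and "a \<le> b" and "P \<subseteq> p" and "c \<ge> 0"
    and slope: "\<And>x K. (x,K) \<in> P \<Longrightarrow> g (Inf K) - g (Sup K) \<le> c * content K"
  shows "- (c * (b - a)) \<le> (\<Sum>(x,K)\<in>P. g (Sup K) - g (Inf K))"
proof -
  have fin: "finite p" using p by blast
  have "(\<Sum>(x,K)\<in>P. content K) \<le> (\<Sum>(x,K)\<in>p. content K)"
    using fin assms(3) by (intro sum_mono2) (auto simp: split_beta)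
  also have "\<dots> = b - a"
    using additive_content_tagged_division[of p a b] p assms(2) by simp
  finally have "c * (\<Sum>(x,K)\<in>P. content K) \<le> c * (b - a)"
    using assms(4) by (rule mult_left_mono)
  then have "- (c * (b - a)) \<le> - (c * (\<Sum>(x,K)\<in>P. content K))"
    by simp
  also have "\<dots> = (\<Sum>(x,K)\<in>P. - c * content K)"
    by (simp add: sum_distrib_left split_beta sum_negf)
  also have "\<dots> \<le> (\<Sum>(x,K)\<in>P. g (Sup K) - g (Inf K))"
  proof (intro sum_mono, clarify)
    fix x K assume "(x,K) \<in> P"
    then show "- c * content K \<le> g (Sup K) - g (Inf K)" using slope[of x K] by simp
  qed
  finally show ?thesis .
qed

text \<open>Fix e > 0 and a tagged division fine for two gauges: one making the
  pieces tagged in E short in total (so absolute continuity controls them), one making g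
  decrease by at most e' times the length on the pieces tagged outside E.\<close>
lemma abs_cont_nonneg_derivative_mono:
  fixes g :: "real \<Rightarrow> real"
  assumes ab: "a \<le> b" and ac: "abs_cont_on {a..b} g" and E: "negligible E"
    and der: "\<And>t. t \<in> {a..b} \<Longrightarrow> t \<notin> E \<Longrightarrow> \<exists>v\<ge>0. (g has_real_derivative v) (at t)"
  shows "g a \<le> g b"
proof (rule field_le_epsilon)
  fix e :: real assume e: "e > 0"
  obtain d where d: "d > 0" and ac_small: "\<forall>p B. p tagged_division_of {a..b} \<longrightarrow> B \<subseteq> p \<longrightarrow>
      (\<forall>(x,K)\<in>B. Inf K < Sup K) \<longrightarrow> (\<Sum>(x,K)\<in>B. content K) < d \<longrightarrow>
      - (e / 2) < (\<Sum>(x,K)\<in>B. g (Sup K) - g (Inf K))"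
    using abs_cont_on_division_pieces[OF ac half_gt_zero[OF e]] by blast
  obtain \<gamma>E where \<gamma>E: "gauge \<gamma>E" and E_small: "\<And>p. p tagged_division_of {a..b} \<Longrightarrow> \<gamma>E fine p \<Longrightarrow>
      (\<Sum>(x,K)\<in>{(x,K)\<in>p. x \<in> E}. content K) < d"
    using negligible_tags_small_content[where a = a and b = b, OF E d] by blast
  define e' where "e' = e / (2 * (b - a + 1))"
  have e': "e' > 0" "e' * (b - a) \<le> e / 2" using e ab by (auto simp: e'_def field_simps)
  obtain \<gamma>D where \<gamma>D: "gauge \<gamma>D" and slope: "\<And>t u w. t \<in> {a..b} - E \<Longrightarrow> u \<le> t \<Longrightarrow> t \<le> w \<Longrightarrow>
      {u..w} \<subseteq> \<gamma>D t \<Longrightarrow> g u - g w \<le> e' * (w - u)"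
    using nonneg_derivative_gauge[of "{a..b} - E" g, OF _ e'(1)] der by blast
  obtain p where p: "p tagged_division_of {a..b}" and fine: "(\<lambda>t. \<gamma>E t \<inter> \<gamma>D t) fine p"
    using fine_division_exists_real[OF gauge_Int[OF \<gamma>E \<gamma>D]] by blast
  note piece = tagged_division_piece[OF p]
  define B where "B = {(x,K)\<in>p. x \<in> E \<and> Inf K < Sup K}"
  have "B \<subseteq> p" by (auto simp: B_def)
  have "g b - g a = (\<Sum>(x,K)\<in>p. g (Sup K) - g (Inf K))"
    by (rule additive_tagged_division_1[OF ab p, symmetric])
  also have "\<dots> = (\<Sum>(x,K)\<in>p - B. g (Sup K) - g (Inf K)) + (\<Sum>(x,K)\<in>B. g (Sup K) - g (Inf K))"
    using sum.subset_diff[OF \<open>B \<subseteq> p\<close> tagged_division_of_finite[OF p]] by simp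
  finally have split: "g b - g a = \<dots>" .
  have "- (e' * (b - a)) \<le> (\<Sum>(x,K)\<in>p - B. g (Sup K) - g (Inf K))"
  proof (rule tagged_division_increments_lower[OF p ab _ less_imp_le[OF e'(1)]])
    fix x K assume xK: "(x,K) \<in> p - B"
    then have xKp: "(x,K) \<in> p" by blast
    show "g (Inf K) - g (Sup K) \<le> e' * content K"
    proof (cases "x \<in> E")
      case True
      then have "Inf K = Sup K" using xK piece(2,3)[OF xKp] by (auto simp: B_def)
      then show ?thesis using piece(5)[OF xKp] by simp
    next
      case False
      have "K \<subseteq> \<gamma>D x" using fine xKp unfolding fine_def by blast
      moreover have "x \<in> {a..b}" using tagged_division_ofD(2,3)[OF p xKp] by blast
      ultimately show ?thesis using slope[of x "Inf K" "Sup K"] False piece[OF xKp] by auto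
    qed
  qed blast
  moreover have "- (e / 2) < (\<Sum>(x,K)\<in>B. g (Sup K) - g (Inf K))"
  proof -
    have "(\<Sum>(x,K)\<in>B. content K) \<le> (\<Sum>(x,K)\<in>{(x,K)\<in>p. x \<in> E}. content K)"
      by (intro sum_mono2 rev_finite_subset[OF tagged_division_of_finite[OF p]])
        (auto simp: B_def split_beta)
    also have "\<dots> < d"
      using E_small[OF p] fine by (simp add: fine_Int)
    finally have "(\<Sum>(x,K)\<in>B. content K) < d" .
    moreover have "\<forall>(x,K)\<in>B. Inf K < Sup K" by (auto simp: B_def)
    ultimately show ?thesis using ac_small p \<open>B \<subseteq> p\<close> by blast
  qed
  ultimately show "g a \<le> g b + e" using split e'(2) by linarith
qed

lemma abs_cont_derivative_lower_bound:
  fixes f :: "real \<Rightarrow> real"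
  assumes ab: "a \<le> b" and ac: "abs_cont_on {a..b} f" and E: "negligible E"
    and der: "\<And>t. t \<in> {a..b} \<Longrightarrow> t \<notin> E \<Longrightarrow> \<exists>v\<ge>c. (f has_real_derivative v) (at t)"
  shows "c * (b - a) \<le> f b - f a"
proof -
  have "(\<lambda>t. f t - c * t) a \<le> (\<lambda>t. f t - c * t) b"
  proof (rule abs_cont_nonneg_derivative_mono[OF ab abs_cont_on_diff_linear[OF ac] E])
    fix t assume "t \<in> {a..b}" "t \<notin> E"
    then obtain v where v: "v \<ge> c" "(f has_real_derivative v) (at t)" using der by blast
    have "((\<lambda>t. f t - c * t) has_real_derivative (v - c)) (at t)"
      using v(2) by (auto intro!: derivative_eq_intros)
    then show "\<exists>v\<ge>0. ((\<lambda>t. f t - c * t) has_real_derivative v) (at t)"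
      using v(1) by (intro exI[of _ "v - c"]) auto
  qed
  then show ?thesis by (simp add: algebra_simps)
qed

section \<open>Filippov set-valued maps and their solutions\<close>

lemma filippov_set_subset:
  assumes "d > 0" and "convex H" and "closed H" and "F ` ball p d \<subseteq> H"
  shows "filippov_set F p \<subseteq> H"
proof
  fix v assume "v \<in> filippov_set F p"
  then have "v \<in> closure (convex hull (F ` (ball p d - {})))"
    using assms(1) unfolding filippov_set_def by blast
  also have "\<dots> \<subseteq> H"
    using assms(2-4) by (simp add: closure_minimal hull_minimal)
  finally show "v \<in> H" .
qed

lemma filippov_set_inner_le:
  fixes F :: "'a::euclidean_space \<Rightarrow> 'a"
  assumes bound: "\<forall>\<^sub>F q in nhds p. u \<bullet> F q \<le> \<phi> q" and cont: "isCont \<phi> p"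
    and v: "v \<in> filippov_set F p"
  shows "u \<bullet> v \<le> \<phi> p"
proof (rule field_le_epsilon)
  fix e :: real assume e: "e > 0"
  have "(\<phi> \<longlongrightarrow> \<phi> p) (nhds p)"
    using cont by (simp add: isCont_def tendsto_nhds_iff)
  then have "\<forall>\<^sub>F q in nhds p. \<phi> q < \<phi> p + e"
    using e by (intro order_tendstoD(2)) auto
  with bound have "\<forall>\<^sub>F q in nhds p. u \<bullet> F q \<le> \<phi> p + e"
    by eventually_elim auto
  then obtain d where d: "d > 0" and near: "\<And>q. dist q p < d \<Longrightarrow> u \<bullet> F q \<le> \<phi> p + e"
    unfolding eventually_nhds_metric by blast
  have "F ` ball p d \<subseteq> {w. u \<bullet> w \<le> \<phi> p + e}"
    using near by (auto simp: dist_commute)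
  then have "filippov_set F p \<subseteq> {w. u \<bullet> w \<le> \<phi> p + e}"
    using filippov_set_subset[OF d convex_halfspace_le closed_halfspace_le] by blast
  then show "u \<bullet> v \<le> \<phi> p + e" using v by blast
qed

lemma filippov_solution_exceptional_set:
  assumes "filippov_solution F I z"
  obtains N where "negligible N"
    "\<And>t. t \<in> I \<Longrightarrow> t \<notin> N \<Longrightarrow> \<exists>v. (z has_vector_derivative v) (at t) \<and> v \<in> filippov_set F (z t)"
proof -
  have "AE t in lebesgue. t \<in> I \<longrightarrow> (\<exists>v. (z has_vector_derivative v) (at t) \<and> v \<in> filippov_set F (z t))"
    using assms unfolding filippov_solution_def by blast
  then obtain N where "\<forall>t \<in> space lebesgue - N.
      t \<in> I \<longrightarrow> (\<exists>v. (z has_vector_derivative v) (at t) \<and> v \<in> filippov_set F (z t))"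
    and "N \<in> null_sets lebesgue"
    by (elim AE_E3) blast
  then show ?thesis by (intro that[of N]) (auto simp: negligible_iff_null_sets)
qed

lemma has_vector_derivative_inner:
  assumes "(z has_vector_derivative v) (at t)"
  shows "((\<lambda>t. u \<bullet> z t) has_real_derivative u \<bullet> v) (at t)"
  using has_derivative_inner_right[OF assms[unfolded has_vector_derivative_def], of u]
  by (simp add: has_real_derivative_iff_has_vector_derivative has_vector_derivative_def algebra_simps)

lemma filippov_solution_directional_bound:
  fixes z :: "real \<Rightarrow> 'a::euclidean_space"
  assumes sol: "filippov_solution F I z" and ab: "a \<le> b" and sub: "{a..b} \<subseteq> I"
    and bound: "\<And>t v. t \<in> {a..b} \<Longrightarrow> v \<in> filippov_set F (z t) \<Longrightarrow> c \<le> u \<bullet> v"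
  shows "c * (b - a) \<le> u \<bullet> z b - u \<bullet> z a"
proof -
  obtain N where N: "negligible N" and der: "\<And>t. t \<in> I \<Longrightarrow> t \<notin> N \<Longrightarrow>
      \<exists>v. (z has_vector_derivative v) (at t) \<and> v \<in> filippov_set F (z t)"
    using filippov_solution_exceptional_set[OF sol] by blast
  have "abs_cont_on {a..b} (\<lambda>t. u \<bullet> z t)"
    using sol sub unfolding filippov_solution_def by (blast intro: abs_cont_on_inner)
  then show ?thesis
  proof (rule abs_cont_derivative_lower_bound[OF ab _ N])
    fix t assume t: "t \<in> {a..b}" "t \<notin> N"
    then obtain v where "(z has_vector_derivative v) (at t)" "v \<in> filippov_set F (z t)"
      using der sub by blast
    then show "\<exists>v\<ge>c. ((\<lambda>t. u \<bullet> z t) has_real_derivative v) (at t)"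
      using bound[OF t(1)] has_vector_derivative_inner by blast
  qed
qed

section \<open>The (A, eta) model\<close>

lemma eta_dot_ge_h_below_one: "\<eta> < 1 \<Longrightarrow> h_fun \<rho> A \<eta> \<le> eta_dot \<rho> A \<eta>"
  unfolding eta_dot_def Let_def by auto

text \<open>A-component of Filippov velocities: the field g is continuous, so its bound survives.\<close>
lemma field_filippov_A_rate:
  assumes "v \<in> filippov_set (field \<delta> \<rho> \<eta>c) p"
  shows "fst v \<le> \<delta> * (snd p - \<eta>c)"
proof -
  have "(1, 0) \<bullet> v \<le> \<delta> * (snd p - \<eta>c)"
  proof (rule filippov_set_inner_le[OF _ _ assms])
    show "\<forall>\<^sub>F q in nhds p. (1, 0) \<bullet> field \<delta> \<rho> \<eta>c q \<le> \<delta> * (snd q - \<eta>c)"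
      by (simp add: field_def g_fun_def)
    show "isCont (\<lambda>q. \<delta> * (snd q - \<eta>c)) p"
      by (intro continuous_intros)
  qed
  then show ?thesis by (cases v) simp
qed

text \<open>eta-component of Filippov velocities below eta = 1: it is at least h, since h is
  continuous and the field dominates h on the open half-plane eta < 1.\<close>
lemma field_filippov_eta_rate:
  assumes "v \<in> filippov_set (field \<delta> \<rho> \<eta>c) p" and "snd p < 1"
  shows "h_fun \<rho> (fst p) (snd p) \<le> snd v"
proof -
  have "(0, -1) \<bullet> v \<le> - h_fun \<rho> (fst p) (snd p)"
  proof (rule filippov_set_inner_le[OF _ _ assms(1)])
    have "open {q :: real \<times> real. snd q < 1}"
      by (intro open_Collect_less continuous_intros)
    then have "\<forall>\<^sub>F q in nhds p. snd q < 1"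
      using assms(2) eventually_nhds_in_open by fastforce
    then show "\<forall>\<^sub>F q in nhds p. (0, -1) \<bullet> field \<delta> \<rho> \<eta>c q \<le> - h_fun \<rho> (fst q) (snd q)"
      by eventually_elim (simp add: field_def eta_dot_ge_h_below_one)
    show "isCont (\<lambda>q. - h_fun \<rho> (fst q) (snd q)) p"
      unfolding h_fun_def by (intro continuous_intros) simp_all
  qed
  then show ?thesis by (cases v) simp
qed

lemma cubic_lower_bound:
  fixes \<eta> :: real
  assumes "\<eta> \<le> 0"
  shows "-600 \<le> 112.88 + 56.91 * \<eta> - 24.31 * \<eta>^2 - 11.05 * \<eta>^3"
proof -
  define x where "x = - \<eta>"
  have x0: "x \<ge> 0" using assms by (simp add: x_def)
  have eq: "112.88 + 56.91 * \<eta> - 24.31 * \<eta>^2 - 11.05 * \<eta>^3 = 112.88 - 56.91 * x - 24.31 * (x * x) + 11.05 * (x * (x * x))"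
    by (simp add: x_def power2_eq_square power3_eq_cube)
  show ?thesis
  proof (cases "x \<le> 4")
    case True
    have "x * x \<le> 4 * 4" using True x0 by (intro mult_mono) auto
    moreover have "x * (x * x) \<ge> 0" using x0 by simp
    ultimately show ?thesis unfolding eq using True x0 by (simp; linarith)
  next
    case False
    have "x * x \<ge> 4 * x" using False x0 by (intro mult_right_mono) auto
    moreover have "x * (x * x) \<ge> 4 * (x * x)" using False x0 by (intro mult_right_mono) auto
    ultimately show ?thesis unfolding eq using x0 by (simp; linarith)
  qed
qed

lemma h_fun_ge_rho:
  assumes "\<rho> > 0" and "\<eta> \<le> 0" and "A \<le> -902"
  shows "\<rho> \<le> h_fun \<rho> A \<eta>"
proof -
  have "1 \<le> 112.88 + 56.91 * \<eta> - 24.31 * \<eta>^2 - 11.05 * \<eta>^3 - A / 1.5"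
    using cubic_lower_bound[OF assms(2)] assms(3) by simp
  then have "\<rho> * 1 \<le> \<rho> * (112.88 + 56.91 * \<eta> - 24.31 * \<eta>^2 - 11.05 * \<eta>^3 - A / 1.5)"
    using assms(1) by (intro mult_left_mono) auto
  then show ?thesis by (simp add: h_fun_def)
qed

lemma solution_A_decay:
  assumes "\<delta> > 0" and sol: "filippov_solution (field \<delta> \<rho> \<eta>c) I z"
    and "a \<le> b" and "{a..b} \<subseteq> I" and eta_nonpos: "\<And>t. t \<in> {a..b} \<Longrightarrow> snd (z t) \<le> 0"
  shows "fst (z b) \<le> fst (z a) - \<delta> * \<eta>c * (b - a)"
proof -
  have "\<delta> * \<eta>c * (b - a) \<le> (-1, 0) \<bullet> z b - (-1, 0) \<bullet> z a"
  proof (rule filippov_solution_directional_bound[OF sol assms(3,4)])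
    fix t v assume "t \<in> {a..b}" "v \<in> filippov_set (field \<delta> \<rho> \<eta>c) (z t)"
    then have "fst v \<le> \<delta> * (snd (z t) - \<eta>c)" "\<delta> * snd (z t) \<le> 0"
      using field_filippov_A_rate eta_nonpos assms(1) by (auto simp: mult_nonneg_nonpos)
    then show "\<delta> * \<eta>c \<le> (-1, 0) \<bullet> v" by (simp add: inner_prod_def algebra_simps)
  qed
  then show ?thesis by (simp add: inner_prod_def)
qed

lemma solution_eta_growth:
  assumes "\<rho> > 0" and sol: "filippov_solution (field \<delta> \<rho> \<eta>c) I z"
    and "a \<le> b" and "{a..b} \<subseteq> I"
    and below: "\<And>t. t \<in> {a..b} \<Longrightarrow> snd (z t) \<le> 0 \<and> fst (z t) \<le> -902"
  shows "\<rho> * (b - a) \<le> snd (z b) - snd (z a)"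
proof -
  have "\<rho> * (b - a) \<le> (0, 1) \<bullet> z b - (0, 1) \<bullet> z a"
  proof (rule filippov_solution_directional_bound[OF sol assms(3,4)])
    fix t v assume t: "t \<in> {a..b}" and v: "v \<in> filippov_set (field \<delta> \<rho> \<eta>c) (z t)"
    have "\<rho> \<le> h_fun \<rho> (fst (z t)) (snd (z t))"
      using h_fun_ge_rho[OF assms(1)] below[OF t] by blast
    also have "\<dots> \<le> snd v"
      using field_filippov_eta_rate[OF v] below[OF t] by simp
    finally show "\<rho> \<le> (0, 1) \<bullet> v" by (simp add: inner_prod_def)
  qed
  then show ?thesis by (simp add: inner_prod_def)
qed

text \<open>Main result: if eta stayed non-positive after t0, A would fall below -902 by time T,
  after which eta would have to climb above 1 within time (1 - eta(T)) / rho.\<close>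
theorem theorem3p3:
  fixes \<delta> \<rho> \<eta>c t0 :: real and I :: "real set" and z :: "real \<Rightarrow> real \<times> real"
  assumes "\<delta> > 0" and "\<rho> > 0" and "\<eta>c > 0"
    and "is_interval I" and "{t0..} \<subseteq> I"
    and "filippov_solution (field \<delta> \<rho> \<eta>c) I z"
    and "snd (z t0) = 0"
  shows "\<exists>t1>t0. snd (z t1) > 0"
proof (rule ccontr)
  assume "\<not> ?thesis"
  then have eta_nonpos: "snd (z t) \<le> 0" if "t0 \<le> t" for t
    using assms(7) that by (metis linorder_not_le order_le_less)
  have sub: "{a..b} \<subseteq> I" if "t0 \<le> a" for a b
    using assms(5) that by auto
  define T where "T = t0 + \<bar>fst (z t0) + 902\<bar> / (\<delta> * \<eta>c)"
  have T: "t0 \<le> T" "\<delta> * \<eta>c * (T - t0) = \<bar>fst (z t0) + 902\<bar>"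
    using assms(1,3) by (auto simp: T_def)
  have A_low: "fst (z t) \<le> -902" if "T \<le> t" for t
  proof -
    have "fst (z t) \<le> fst (z t0) - \<delta> * \<eta>c * (t - t0)"
      using solution_A_decay[OF assms(1,6), of t0 t] sub eta_nonpos T that by auto
    moreover have "\<delta> * \<eta>c * (T - t0) \<le> \<delta> * \<eta>c * (t - t0)"
      using assms(1,3) that by (intro mult_left_mono) auto
    ultimately show ?thesis using T(2) by linarith
  qed
  define b where "b = T + (1 - snd (z T)) / \<rho>"
  have "T \<le> b" "\<rho> * (b - T) = 1 - snd (z T)"
    using assms(2) eta_nonpos[OF T(1)] by (auto simp: b_def)
  moreover have "\<rho> * (b - T) \<le> snd (z b) - snd (z T)"
    using solution_eta_growth[OF assms(2,6) \<open>T \<le> b\<close> sub] T(1) eta_nonpos A_low by auto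
  ultimately show False using eta_nonpos[of b] T(1) by linarith
qed

end
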